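(* For any two distinct jobs $i,j$ and any time $t\ge 0$, we have $i\prec_{l(t)} j$ if and only if $\varphi_i(t)>\varphi_j(t)$.
   Context: Each job $j$ has processing time $p_j>0$ and weight $w_j>0$; jobs are processed on a single machine consecutively, job $j$ having completion time $C_j$, and the cost of a schedule is $\sum_j -w_j/C_j$ (to be minimized). For $t\ge0$, $\varphi_j(t)=\frac{w_j}{p_j(p_j+t)}$. Local dominance: $i\prec_{l(t)} j$ means that if job $j$ starts at time $t$ and is immediately followed by job $i$, then exchanging the positions of $i$ and $j$ (so that $i$ starts at $t$ and is immediately followed by $j$) strictly decreases the cost; since the completion times of all other jobs are unchanged, this means $\frac{w_i}{t+p_i}+\frac{w_j}{t+p_i+p_j}>\frac{w_j}{t+p_j}+\frac{w_i}{t+p_i+p_j}$. *)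

theory Defs
  imports Complex_Main
begin

text \<open>Jobs are elements of a type 'j; p j is the processing time, w j the weight.\<close>

definition phi :: "('j \<Rightarrow> real) \<Rightarrow> ('j \<Rightarrow> real) \<Rightarrow> 'j \<Rightarrow> real \<Rightarrow> real" where
  "phi p w j t = w j / (p j * (p j + t))"

text \<open>Local dominance i \<prec>_{l(t)} j: with j starting at t immediately followed by i,
  swapping i and j strictly decreases the cost sum of -w_k/C_k (other completion
  times unchanged).\<close>
definition local_dom :: "('j \<Rightarrow> real) \<Rightarrow> ('j \<Rightarrow> real) \<Rightarrow> real \<Rightarrow> 'j \<Rightarrow> 'j \<Rightarrow> bool" where
  "local_dom p w t i j \<longleftrightarrow>
     (- w i / (t + p i) - w j / (t + p i + p j)) < (- w j / (t + p j) - w i / (t + p j + p i))"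

end

theory Submission
  imports Defs
begin

(* Exchanging the adjacent jobs j, i (j first) into i, j decreases the cost by
   p_i p_j / (t + p_i + p_j) * (phi_i(t) - phi_j(t)), a positive multiple of
   phi_i(t) - phi_j(t). *)

lemma swap_gain_eq:
  fixes a b x y t :: real
  assumes "a \<noteq> 0" "b \<noteq> 0" "t + a \<noteq> 0" "t + b \<noteq> 0" "t + a + b \<noteq> 0"
  shows "(x / (t + a) + y / (t + a + b)) - (y / (t + b) + x / (t + b + a))
       = a * b / (t + a + b) * (x / (a * (a + t)) - y / (b * (b + t)))"
proof -
  have "a + t \<noteq> 0" "b + t \<noteq> 0" "t + b + a \<noteq> 0"
    using assms by (simp_all add: add.commute add.left_commute)
  with assms show ?thesis by (simp add: divide_simps) algebra
qed

lemma local_dom_iff_phi_less: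
  fixes p w :: "'j \<Rightarrow> real"
  assumes "0 < p i" "0 < p j" "0 < t + p i" "0 < t + p j"
  shows "local_dom p w t i j \<longleftrightarrow> phi p w j t < phi p w i t"
proof -
  let ?gain = "(w i / (t + p i) + w j / (t + p i + p j)) - (w j / (t + p j) + w i / (t + p j + p i))"
  have "local_dom p w t i j \<longleftrightarrow> 0 < ?gain"
    unfolding local_dom_def by linarith
  moreover have "?gain = p i * p j / (t + p i + p j) * (phi p w i t - phi p w j t)"
    unfolding phi_def using assms by (intro swap_gain_eq) auto
  moreover have "0 < p i * p j / (t + p i + p j)"
    using assms by simp
  ultimately show ?thesis
    by (metis diff_gt_0_iff_gt zero_less_mult_pos zero_less_mult_iff)
qed

theorem lemma1:
  fixes p w :: "'j \<Rightarrow> real" and i j :: 'j and t :: real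
  assumes "\<And>k. p k > 0" and "\<And>k. w k > 0"
    and "i \<noteq> j" and "t \<ge> 0"
  shows "local_dom p w t i j \<longleftrightarrow> phi p w i t > phi p w j t"
  using assms(1)[of i] assms(1)[of j] assms(4) by (simp add: local_dom_iff_phi_less)

end
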